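(* There is an absolute constant $c>0$ such that for all positive integers $f,l$ and every $N$ that is a positive multiple of $l^f$, there is an Ising instance on $N$ variables (with integer coefficients) whose graph $G$ has every vertex of degree at most $d=f(l-1)$, and which has at least $$2^{N\left(1-\frac{f\log_2(f\sqrt l/c)}{l}\right)}$$ global minima, every one of which is a $(2^f-1)$-minimum.
   Context: An Ising instance on $N$ variables is given by real numbers $h_i$ and $J_{ij}=J_{ji}$ ($i\neq j$), $J_{ii}=0$, and (up to an additive constant, which is irrelevant) defines $H(S)=\frac14\sum_ih_iS_i+\frac14\sum_{i<j}J_{ij}S_iS_j$ on $S\in\{-1,+1\}^N$. Its graph $G$ has vertices $1,\dots,N$ and an edge $\{i,j\}$ iff $J_{ij}\neq0$. A global minimum is an assignment minimizing $H$. For an integer $k\ge1$, an assignment $A$ is a $k$-minimum if every assignment differing from $A$ in at least one and at most $k$ variables has a strictly larger value of $H$. *)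

theory Defs
  imports Complex_Main "HOL-Library.FuncSet"
begin

definition assignments :: "nat \<Rightarrow> (nat \<Rightarrow> int) set" where
  "assignments N = {0..<N} \<rightarrow>\<^sub>E {-1, 1}"

definition ising_instance :: "nat \<Rightarrow> (nat \<Rightarrow> int) \<Rightarrow> (nat \<Rightarrow> nat \<Rightarrow> int) \<Rightarrow> bool" where
  "ising_instance N h J \<longleftrightarrow> (\<forall>i<N. \<forall>j<N. J i j = J j i) \<and> (\<forall>i<N. J i i = 0)"

definition energy :: "nat \<Rightarrow> (nat \<Rightarrow> int) \<Rightarrow> (nat \<Rightarrow> nat \<Rightarrow> int) \<Rightarrow> (nat \<Rightarrow> int) \<Rightarrow> real" where
  "energy N h J S = (1/4) * (\<Sum>i<N. real_of_int (h i * S i))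
     + (1/4) * (\<Sum>(i,j)\<in>{(i,j). i < j \<and> j < N}. real_of_int (J i j * S i * S j))"

definition vertex_degree :: "nat \<Rightarrow> (nat \<Rightarrow> nat \<Rightarrow> int) \<Rightarrow> nat \<Rightarrow> nat" where
  "vertex_degree N J i = card {j. j < N \<and> j \<noteq> i \<and> J i j \<noteq> 0}"

definition hamming :: "nat \<Rightarrow> (nat \<Rightarrow> int) \<Rightarrow> (nat \<Rightarrow> int) \<Rightarrow> nat" where
  "hamming N A B = card {i. i < N \<and> A i \<noteq> B i}"

definition global_min :: "nat \<Rightarrow> (nat \<Rightarrow> int) \<Rightarrow> (nat \<Rightarrow> nat \<Rightarrow> int) \<Rightarrow> (nat \<Rightarrow> int) \<Rightarrow> bool" where
  "global_min N h J A \<longleftrightarrow> A \<in> assignments N \<and>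
     (\<forall>S \<in> assignments N. energy N h J A \<le> energy N h J S)"

definition k_minimum :: "nat \<Rightarrow> (nat \<Rightarrow> int) \<Rightarrow> (nat \<Rightarrow> nat \<Rightarrow> int) \<Rightarrow> nat \<Rightarrow> (nat \<Rightarrow> int) \<Rightarrow> bool" where
  "k_minimum N h J k A \<longleftrightarrow> A \<in> assignments N \<and>
     (\<forall>S \<in> assignments N. 1 \<le> hamming N A S \<and> hamming N A S \<le> k \<longrightarrow>
        energy N h J A < energy N h J S)"

end

theory Submission
  imports Defs "HOL-Analysis.Convex"
begin

text \<open>The instance lives on \<open>q\<close> copies of the grid \<open>[m]\<^sup>f\<close>, where \<open>m\<close> is the largest even number
  \<open>\<le> l\<close>, embedded into the \<open>N = q l\<^sup>f\<close> variables. Variables off the grid get field \<open>1\<close>, and every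
  axis-parallel line \<open>L\<close> of the grid contributes \<open>(\<Sum>v\<in>L. S v)\<^sup>2\<close> through the couplings. Hence
  the ground states are exactly the balanced assignments: \<open>-1\<close> off the grid and summing to zero on
  every line. Every nonempty set of fewer than \<open>2\<^sup>f\<close> grid points meets some line in exactly one
  point, so distinct ground states differ in at least \<open>2\<^sup>f\<close> variables.

  To count balanced assignments, note that \<open>m\<close>-tuples of balanced assignments on the
  \<open>f\<close>-dimensional grid whose columns sum to zero interleave into balanced assignments on the
  \<open>(f+1)\<close>-dimensional grid. Concatenating two \<open>m/2\<close>-tuples with equal column sums, the second one
  negated, produces such tuples; by Cauchy--Schwarz and a second moment estimate a fraction
  \<open>(kappa / sqrt m) ^ card grid\<close> of all \<open>m\<close>-tuples has zero column sums. Iterating over \<open>f\<close>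
  gives the bound with \<open>c = kappa / 2\<close>.\<close>

section \<open>Zero-sum tuples of sign vectors\<close>

lemma card_mult_exp_mean_le_sum_exp:
  fixes a :: "'a \<Rightarrow> real"
  assumes "finite Y" "Y \<noteq> {}"
  shows "real (card Y) * exp ((\<Sum>U\<in>Y. a U) / card Y) \<le> (\<Sum>U\<in>Y. exp (a U))"
proof -
  define b where "b = (\<Sum>U\<in>Y. a U) / card Y"
  have tangent: "exp b * (1 + (a U - b)) \<le> exp (a U)" for U
  proof -
    have "exp b * (1 + (a U - b)) \<le> exp b * exp (a U - b)"
      by simp
    also have "\<dots> = exp (a U)" by (simp add: exp_add[symmetric])
    finally show ?thesis .
  qed
  have "(\<Sum>U\<in>Y. exp b * (1 + (a U - b))) = exp b * (card Y + (\<Sum>U\<in>Y. a U) - card Y * b)"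
    by (simp add: sum_distrib_left[symmetric] sum.distrib sum_subtractf)
  also have "\<dots> = real (card Y) * exp b"
    using assms by (simp add: b_def)
  finally show ?thesis
    using sum_mono[of Y "\<lambda>U. exp b * (1 + (a U - b))", OF tangent] by (simp add: b_def)
qed

lemma sum_lessThan_add:
  fixes f :: "nat \<Rightarrow> 'a::comm_monoid_add"
  shows "(\<Sum>i<p + q. f i) = (\<Sum>i<p. f i) + (\<Sum>i<q. f (p + i))"
  by (induction q) (auto simp: add.assoc)

definition flip_on :: "'b set \<Rightarrow> ('b \<Rightarrow> int) \<Rightarrow> 'b \<Rightarrow> int" where
  "flip_on C S = (\<lambda>x. if x \<in> C then - S x else S x)"

lemma flip_on_flip_on [simp]: "flip_on C (flip_on C S) = S"
  by (simp add: flip_on_def fun_eq_iff)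

text \<open>The flip symmetry makes distinct rows uncorrelated.\<close>

lemma sum_square_column_sum:
  fixes X :: "('b \<Rightarrow> int) set"
  assumes "finite X" and x: "x \<in> C"
    and unit: "\<And>S. S \<in> X \<Longrightarrow> \<bar>S x\<bar> = 1"
    and flip: "\<And>S. S \<in> X \<Longrightarrow> flip_on C S \<in> X"
  shows "(\<Sum>U\<in>{0..<p} \<rightarrow>\<^sub>E X. (\<Sum>i<p. U i x)\<^sup>2) = int p * int (card X ^ p)"
proof -
  define Y where "Y = {0..<p} \<rightarrow>\<^sub>E X"
  have correlation: "(\<Sum>U\<in>Y. U i x * U j x) = (if i = j then int (card Y) else 0)"
    if ij: "i < p" "j < p" for i j
  proof (cases "i = j")
    case True
    have "U i x * U i x = 1" if "U \<in> Y" for U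
    proof -
      have "\<bar>U i x\<bar> = 1" using unit PiE_mem[OF that[unfolded Y_def]] ij by simp
      then show ?thesis by (metis abs_mult_self_eq mult_1)
    qed
    then show ?thesis using True by simp
  next
    case False
    define \<tau> where "\<tau> U = U(j := flip_on C (U j))" for U :: "nat \<Rightarrow> 'b \<Rightarrow> int"
    have \<tau>_Y: "\<tau> U \<in> Y" if "U \<in> Y" for U
      using that ij flip by (auto simp: Y_def \<tau>_def PiE_iff extensional_def)
    have \<tau>_\<tau>: "\<tau> (\<tau> U) = U" for U
      by (simp add: \<tau>_def)
    have \<tau>_odd: "\<tau> U i x * \<tau> U j x = - (U i x * U j x)" for U
      using False x by (simp add: \<tau>_def flip_on_def)
    have "(\<Sum>U\<in>Y. U i x * U j x) = (\<Sum>U\<in>Y. - (U i x * U j x))"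
      by (rule sum.reindex_bij_witness[where i=\<tau> and j=\<tau>]) (simp_all add: \<tau>_Y \<tau>_\<tau> \<tau>_odd)
    then show ?thesis using False by (simp add: sum_negf)
  qed
  have "(\<Sum>U\<in>Y. (\<Sum>i<p. U i x)\<^sup>2) = (\<Sum>i<p. \<Sum>j<p. \<Sum>U\<in>Y. U i x * U j x)"
    by (simp add: power2_eq_square sum_product sum.swap[of _ Y])
  also have "\<dots> = int p * int (card Y)"
    by (simp add: correlation)
  finally show ?thesis by (simp add: Y_def card_PiE)
qed

lemma sum_exp_abs_le:
  fixes p m :: nat
  assumes "1 \<le> m"
  shows "(\<Sum>t\<in>{-int p..int p}. exp (-2 * \<bar>real_of_int t\<bar> / sqrt m)) \<le> 3 * sqrt m"
proof -
  define g where "g t = exp (-2 * \<bar>real_of_int t\<bar> / sqrt m)" for t :: int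
  define r where "r = exp (-2 / sqrt m)"
  have sqrt_m: "sqrt m \<ge> 1" using assms by simp
  have r: "0 < r" "r < 1" using sqrt_m by (auto simp: r_def)
  have "{-int p..int p} = uminus ` {1..int p} \<union> {0..int p}"
    by (auto simp: image_iff intro!: bexI[where x="- _"])
  then have "(\<Sum>t\<in>{-int p..int p}. g t) = (\<Sum>t\<in>uminus ` {1..int p}. g t) + (\<Sum>t\<in>{0..int p}. g t)"
    by (simp add: sum.union_disjoint[symmetric] disjoint_iff)
  also have "(\<Sum>t\<in>uminus ` {1..int p}. g t) = (\<Sum>t\<in>{1..int p}. g (- t))"
    using sum.reindex[of uminus "{1..int p}" g] by simp
  also have "\<dots> = (\<Sum>t\<in>{1..int p}. g t)"
    by (simp add: g_def)
  also have "\<dots> \<le> (\<Sum>t\<in>{0..int p}. g t)"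
    by (rule sum_mono2) (auto simp: g_def)
  also have "(\<Sum>t\<in>{0..int p}. g t) = (\<Sum>n<Suc p. r ^ n)"
  proof -
    have "{0..int p} = int ` {..<Suc p}"
      by (auto simp: image_iff intro!: bexI[where x="nat _"])
    then show ?thesis
      by (simp add: sum.reindex g_def r_def exp_of_nat_mult[symmetric] mult.commute del: sum.lessThan_Suc)
  qed
  also have "(\<Sum>n<Suc p. r ^ n) \<le> 1 / (1 - r)"
    using r by (simp add: sum_gp_strict divide_right_mono del: sum.lessThan_Suc)
  also have "1 / (1 - r) \<le> 1 + sqrt m / 2"
  proof -
    define y where "y = 2 / sqrt m"
    have y: "y > 0" using sqrt_m by (simp add: y_def)
    have "r * (1 + y) \<le> r * exp y"
      using r by simp
    also have "\<dots> = 1" by (simp add: r_def y_def exp_minus field_simps)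
    finally have "y / (1 + y) \<le> 1 - r" using y by (simp add: field_simps)
    then have "1 / (1 - r) \<le> (1 + y) / y"
      using y r by (simp add: divide_simps mult.commute)
    also have "\<dots> = 1 + sqrt m / 2" using sqrt_m by (simp add: y_def field_simps)
    finally show ?thesis .
  qed
  finally show ?thesis using sqrt_m unfolding g_def by linarith
qed

lemma abs_div_sqrt_le:
  fixes t m :: real
  assumes "m > 0"
  shows "\<bar>t\<bar> / sqrt m \<le> (t\<^sup>2 / m + 1) / 2"
proof -
  define s where "s = sqrt m"
  have s: "s > 0" "m = s\<^sup>2" using assms by (auto simp: s_def)
  have "2 * \<bar>t\<bar> * s \<le> t\<^sup>2 + s\<^sup>2"
    using sum_squares_bound[of "\<bar>t\<bar>" s] by simp
  then have "\<bar>t\<bar> / s \<le> (t\<^sup>2 / s\<^sup>2 + 1) / 2"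
    using s by (simp add: field_simps power2_eq_square)
  then show ?thesis using assms by (simp add: s_def)
qed

definition column_sums :: "nat \<Rightarrow> 'b set \<Rightarrow> (nat \<Rightarrow> 'b \<Rightarrow> int) \<Rightarrow> 'b \<Rightarrow> int" where
  "column_sums p C U = restrict (\<lambda>x. \<Sum>i<p. U i x) C"

definition zero_sum_tuples :: "nat \<Rightarrow> ('b \<Rightarrow> int) set \<Rightarrow> 'b set \<Rightarrow> (nat \<Rightarrow> 'b \<Rightarrow> int) set" where
  "zero_sum_tuples m X C = {A \<in> {0..<m} \<rightarrow>\<^sub>E X. \<forall>x\<in>C. (\<Sum>i<m. A i x) = 0}"

lemma finite_zero_sum_tuples: "finite X \<Longrightarrow> finite (zero_sum_tuples m X C)"
  by (simp add: zero_sum_tuples_def finite_PiE)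

text \<open>Two \<open>p\<close>-tuples with equal column sums, the second one flipped, concatenate to a zero-sum
  \<open>2p\<close>-tuple.\<close>

lemma card_equal_column_sums_le:
  fixes X :: "('b \<Rightarrow> int) set"
  assumes "finite X" and flip: "\<And>S. S \<in> X \<Longrightarrow> flip_on C S \<in> X"
  shows "card {(U, V) \<in> ({0..<p} \<rightarrow>\<^sub>E X) \<times> ({0..<p} \<rightarrow>\<^sub>E X). column_sums p C U = column_sums p C V}
    \<le> card (zero_sum_tuples (2 * p) X C)"
proof -
  define Y where "Y = {0..<p} \<rightarrow>\<^sub>E X"
  define concat where "concat U V = restrict (\<lambda>i. if i < p then U i else flip_on C (V (i - p))) {0..<2 * p}"
    for U V :: "nat \<Rightarrow> 'b \<Rightarrow> int"
  have "inj_on (\<lambda>(U, V). concat U V) (Y \<times> Y)"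
  proof (rule inj_onI, clarify)
    fix U V U' V' assume UV: "U \<in> Y" "V \<in> Y" "U' \<in> Y" "V' \<in> Y"
      and eq: "concat U V = concat U' V'"
    have "U i = U' i" if "i < p" for i
      using fun_cong[OF eq, of i] that by (simp add: concat_def)
    then have "U = U'" using UV by (intro PiE_ext[of _ "{0..<p}" "\<lambda>_. X"]) (auto simp: Y_def)
    have "flip_on C (V i) = flip_on C (V' i)" if "i < p" for i
      using fun_cong[OF eq, of "p + i"] that by (simp add: concat_def)
    then have "V i = V' i" if "i < p" for i
      using that by (metis flip_on_flip_on)
    then have "V = V'" using UV by (intro PiE_ext[of _ "{0..<p}" "\<lambda>_. X"]) (auto simp: Y_def)
    with \<open>U = U'\<close> show "U = U' \<and> V = V'" by simp
  qed
  moreover have "concat U V \<in> zero_sum_tuples (2 * p) X C"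
    if UV: "U \<in> Y" "V \<in> Y" and sums: "column_sums p C U = column_sums p C V" for U V
  proof -
    have "concat U V \<in> {0..<2 * p} \<rightarrow>\<^sub>E X"
      using UV flip by (auto simp: concat_def Y_def PiE_iff)
    moreover have "(\<Sum>i<2 * p. concat U V i x) = 0" if x: "x \<in> C" for x
    proof -
      have "(\<Sum>i<2 * p. concat U V i x) = (\<Sum>i<p. U i x) + (\<Sum>i<p. - V i x)"
        using x by (simp add: mult_2 sum_lessThan_add concat_def flip_on_def)
      also have "\<dots> = column_sums p C U x - column_sums p C V x"
        using x by (simp add: column_sums_def sum_negf)
      finally show ?thesis using sums by simp
    qed
    ultimately show ?thesis by (simp add: zero_sum_tuples_def)
  qed
  ultimately show ?thesis
    unfolding Y_def[symmetric]
    by (intro card_inj_on_le[of "\<lambda>(U, V). concat U V"]) (auto simp: assms finite_zero_sum_tuples inj_on_def)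
qed

lemma sum_comp_square_le_card_collisions:
  fixes key :: "'a \<Rightarrow> 'b" and w :: "'b \<Rightarrow> real"
  assumes "finite Y"
  shows "(\<Sum>U\<in>Y. w (key U))\<^sup>2
    \<le> real (card {(U, V) \<in> Y \<times> Y. key U = key V}) * (\<Sum>k\<in>key ` Y. (w k)\<^sup>2)"
proof -
  define fibre where "fibre k = {U \<in> Y. key U = k}" for k
  have "{(U, V) \<in> Y \<times> Y. key U = key V} = (\<Union>k\<in>key ` Y. fibre k \<times> fibre k)"
    by (auto simp: fibre_def)
  also have "card \<dots> = (\<Sum>k\<in>key ` Y. card (fibre k) ^ 2)"
    using assms by (subst card_UN_disjoint) (auto simp: fibre_def card_cartesian_product power2_eq_square)
  finally have collisions: "card {(U, V) \<in> Y \<times> Y. key U = key V} = (\<Sum>k\<in>key ` Y. card (fibre k) ^ 2)" .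
  have "(\<Sum>U\<in>Y. w (key U)) = (\<Sum>k\<in>key ` Y. \<Sum>U\<in>fibre k. w (key U))"
    unfolding fibre_def by (rule sum.image_gen[OF assms])
  also have "\<dots> = (\<Sum>k\<in>key ` Y. real (card (fibre k)) * w k)"
    by (simp add: fibre_def)
  finally have "(\<Sum>U\<in>Y. w (key U))\<^sup>2 = (\<Sum>k\<in>key ` Y. real (card (fibre k)) * w k)\<^sup>2"
    by simp
  also have "\<dots> \<le> (\<Sum>k\<in>key ` Y. (real (card (fibre k)))\<^sup>2) * (\<Sum>k\<in>key ` Y. (w k)\<^sup>2)"
    by (rule Cauchy_Schwarz_ineq_sum)
  also have "(\<Sum>k\<in>key ` Y. (real (card (fibre k)))\<^sup>2) = real (card {(U, V) \<in> Y \<times> Y. key U = key V})"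
    unfolding collisions by simp
  finally show ?thesis .
qed

lemma sum_exp_abs_PiE_le:
  fixes p m :: nat
  assumes "finite C" "1 \<le> m" "K \<subseteq> C \<rightarrow>\<^sub>E {-int p..int p}"
  shows "(\<Sum>k\<in>K. (exp (- (\<Sum>x\<in>C. \<bar>real_of_int (k x)\<bar>) / sqrt m))\<^sup>2) \<le> (3 * sqrt m) ^ card C"
proof -
  define g where "g t = exp (-2 * \<bar>real_of_int t\<bar> / sqrt m)" for t
  have square: "(exp (- s / sqrt m))\<^sup>2 = exp (-2 * s / sqrt m)" for s
    by (simp add: power2_eq_square exp_add[symmetric])
  have "(\<Sum>k\<in>K. (exp (- (\<Sum>x\<in>C. \<bar>real_of_int (k x)\<bar>) / sqrt m))\<^sup>2)
      = (\<Sum>k\<in>K. exp (-2 * (\<Sum>x\<in>C. \<bar>real_of_int (k x)\<bar>) / sqrt m))"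
    by (simp only: square)
  also have "\<dots> = (\<Sum>k\<in>K. \<Prod>x\<in>C. g (k x))"
    using assms(1) by (simp add: g_def exp_sum[symmetric] sum_divide_distrib sum_distrib_left)
  also have "\<dots> \<le> (\<Sum>k\<in>C \<rightarrow>\<^sub>E {-int p..int p}. \<Prod>x\<in>C. g (k x))"
    using assms by (intro sum_mono2) (auto simp: finite_PiE g_def intro: prod_nonneg)
  also have "\<dots> = (\<Sum>t\<in>{-int p..int p}. g t) ^ card C"
    using prod_sum_PiE[of C "\<lambda>_. {-int p..int p}" "\<lambda>_. g"] assms(1) by simp
  also have "\<dots> \<le> (3 * sqrt m) ^ card C"
    using sum_exp_abs_le[OF assms(2)] by (intro power_mono) (auto simp: g_def intro: sum_nonneg)
  finally show ?thesis .
qed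

lemma card_mult_exp_le_sum_exp_column_sums:
  fixes X :: "('b \<Rightarrow> int) set"
  assumes "finite X" "X \<noteq> {}" "finite C" "0 < p"
    and unit: "\<And>S x. S \<in> X \<Longrightarrow> x \<in> C \<Longrightarrow> \<bar>S x\<bar> = 1"
    and flip: "\<And>S. S \<in> X \<Longrightarrow> flip_on C S \<in> X"
  shows "real (card X ^ p) * exp (- 3 * real (card C) / 4)
    \<le> (\<Sum>U\<in>{0..<p} \<rightarrow>\<^sub>E X. exp (- (\<Sum>x\<in>C. \<bar>real_of_int (\<Sum>i<p. U i x)\<bar>) / sqrt (2 * p)))"
proof -
  define Y where "Y = {0..<p} \<rightarrow>\<^sub>E X"
  define m where "m = 2 * real p"
  define a where "a U = - (\<Sum>x\<in>C. ((real_of_int (\<Sum>i<p. U i x))\<^sup>2 / m + 1) / 2)"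
    for U :: "nat \<Rightarrow> 'b \<Rightarrow> int"
  have m: "m > 0" using assms by (simp add: m_def)
  have Y: "finite Y" "Y \<noteq> {}" "card Y = card X ^ p"
    using assms by (auto simp: Y_def finite_PiE card_PiE PiE_eq_empty_iff)
  have mean: "(\<Sum>U\<in>Y. ((real_of_int (\<Sum>i<p. U i x))\<^sup>2 / m + 1) / 2) = 3 * card Y / 4"
    if "x \<in> C" for x
  proof -
    have "(\<Sum>U\<in>Y. (\<Sum>i<p. U i x)\<^sup>2) = int p * int (card Y)"
      using sum_square_column_sum[of X x C p] assms that by (simp add: Y_def card_PiE)
    then have "(\<Sum>U\<in>Y. (real_of_int (\<Sum>i<p. U i x))\<^sup>2) = real p * card Y"
      using arg_cong[of _ _ real_of_int] by fastforce
    then show ?thesis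
      using m by (simp add: sum_divide_distrib[symmetric] sum.distrib m_def field_simps)
  qed
  have "(\<Sum>U\<in>Y. a U) = - (\<Sum>x\<in>C. \<Sum>U\<in>Y. ((real_of_int (\<Sum>i<p. U i x))\<^sup>2 / m + 1) / 2)"
    unfolding a_def by (simp add: sum_negf sum.swap[of _ C])
  also have "\<dots> = - (\<Sum>x\<in>C. 3 * card Y / 4)"
    by (simp only: mean cong: sum.cong)
  finally have "(\<Sum>U\<in>Y. a U) / card Y = - 3 * real (card C) / 4"
    using Y(1,2) by (simp add: card_gt_0_iff)
  then have "real (card Y) * exp (- 3 * real (card C) / 4) \<le> (\<Sum>U\<in>Y. exp (a U))"
    using card_mult_exp_mean_le_sum_exp[OF Y(1,2), of a] by simp
  also have "\<dots> \<le> (\<Sum>U\<in>Y. exp (- (\<Sum>x\<in>C. \<bar>real_of_int (\<Sum>i<p. U i x)\<bar>) / sqrt m))"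
    using abs_div_sqrt_le[OF m]
    by (intro sum_mono) (simp add: a_def sum_divide_distrib sum_mono)
  finally show ?thesis using Y(3) by (simp add: m_def Y_def)
qed

lemma column_sums_in_PiE:
  assumes "U \<in> {0..<p} \<rightarrow>\<^sub>E X" and unit: "\<And>S x. S \<in> X \<Longrightarrow> x \<in> C \<Longrightarrow> \<bar>S x\<bar> = 1"
  shows "column_sums p C U \<in> C \<rightarrow>\<^sub>E {-int p..int p}"
proof -
  have "(\<Sum>i<p. U i x) \<in> {-int p..int p}" if "x \<in> C" for x
  proof -
    have "\<bar>\<Sum>i<p. U i x\<bar> \<le> (\<Sum>i<p. \<bar>U i x\<bar>)" by (rule sum_abs)
    also have "\<dots> = int p"
      using assms that by (simp add: PiE_iff)
    finally show ?thesis by (auto simp: abs_le_iff)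
  qed
  then show ?thesis by (auto simp: column_sums_def)
qed

lemma square_sum_exp_column_sums_le:
  fixes X :: "('b \<Rightarrow> int) set"
  assumes "finite X" "finite C" "0 < p"
    and unit: "\<And>S x. S \<in> X \<Longrightarrow> x \<in> C \<Longrightarrow> \<bar>S x\<bar> = 1"
    and flip: "\<And>S. S \<in> X \<Longrightarrow> flip_on C S \<in> X"
  shows "(\<Sum>U\<in>{0..<p} \<rightarrow>\<^sub>E X. exp (- (\<Sum>x\<in>C. \<bar>real_of_int (\<Sum>i<p. U i x)\<bar>) / sqrt (2 * p)))\<^sup>2
    \<le> card (zero_sum_tuples (2 * p) X C) * (3 * sqrt (2 * p)) ^ card C"
proof -
  define Y where "Y = {0..<p} \<rightarrow>\<^sub>E X"
  define w where "w k = exp (- (\<Sum>x\<in>C. \<bar>real_of_int (k x)\<bar>) / sqrt (2 * p))" for k :: "'b \<Rightarrow> int"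
  have "(\<Sum>U\<in>Y. exp (- (\<Sum>x\<in>C. \<bar>real_of_int (\<Sum>i<p. U i x)\<bar>) / sqrt (2 * p)))
      = (\<Sum>U\<in>Y. w (column_sums p C U))"
    by (simp add: w_def column_sums_def cong: sum.cong)
  also have "(\<Sum>U\<in>Y. w (column_sums p C U))\<^sup>2
      \<le> card {(U, V) \<in> Y \<times> Y. column_sums p C U = column_sums p C V}
        * (\<Sum>k\<in>column_sums p C ` Y. (w k)\<^sup>2)"
    using assms(1) by (intro sum_comp_square_le_card_collisions) (simp add: Y_def finite_PiE)
  also have "\<dots> \<le> card (zero_sum_tuples (2 * p) X C) * (3 * sqrt (2 * p)) ^ card C"
  proof (rule mult_mono)
    show "real (card {(U, V) \<in> Y \<times> Y. column_sums p C U = column_sums p C V})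
      \<le> real (card (zero_sum_tuples (2 * p) X C))"
      using card_equal_column_sums_le[OF assms(1) flip] by (simp add: Y_def)
    show "(\<Sum>k\<in>column_sums p C ` Y. (w k)\<^sup>2) \<le> (3 * sqrt (2 * p)) ^ card C"
      using sum_exp_abs_PiE_le[OF assms(2), of "2 * p" "column_sums p C ` Y" p] assms(3)
        column_sums_in_PiE[of _ p X C] unit
      by (auto simp: w_def Y_def)
  qed (auto intro: sum_nonneg)
  finally show ?thesis by (simp add: Y_def)
qed

text \<open>The constant is the square of the Jensen bound \<open>exp (-3/4)\<close> divided by the factor \<open>3\<close>
  of the geometric bound \<open>sum_exp_abs_le\<close>.\<close>

definition kappa :: real where
  "kappa = exp (-3/2) / 3"

lemma kappa_pos: "0 < kappa"
  by (simp add: kappa_def)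

lemma kappa_less_one: "kappa < 1"
proof -
  have "exp (-3/2 :: real) < 1" by simp
  then show ?thesis unfolding kappa_def by linarith
qed

lemma card_zero_sum_tuples_ge:
  fixes X :: "('b \<Rightarrow> int) set"
  assumes "finite X" "finite C" "even m" "0 < m"
    and unit: "\<And>S x. S \<in> X \<Longrightarrow> x \<in> C \<Longrightarrow> \<bar>S x\<bar> = 1"
    and flip: "\<And>S. S \<in> X \<Longrightarrow> flip_on C S \<in> X"
  shows "real (card X) ^ m * (kappa / sqrt m) ^ card C \<le> card (zero_sum_tuples m X C)"
proof (cases "X = {}")
  case True
  then show ?thesis using assms(4) by (simp add: zero_sum_tuples_def power_0_left)
next
  case False
  obtain p where m: "m = 2 * p" using assms(3) by blast
  have p: "0 < p" using assms(4) m by simp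
  define E where "E = exp (- 3 * real (card C) / 4)"
  define D where "D = (3 * sqrt m) ^ card C"
  have "(real (card X ^ p) * E)\<^sup>2 \<le> card (zero_sum_tuples m X C) * D"
    using power_mono[OF card_mult_exp_le_sum_exp_column_sums[of X C p], of 2]
      square_sum_exp_column_sums_le[of X C p] assms(1,2) False p unit flip
    by (simp add: E_def D_def m)
  moreover have "E\<^sup>2 = exp (real (card C) * (-3/2))"
    by (simp add: E_def power2_eq_square exp_add[symmetric])
  then have "E\<^sup>2 = exp (-3/2) ^ card C"
    by (simp only: exp_of_nat_mult)
  then have "(real (card X ^ p) * E)\<^sup>2 = real (card X) ^ m * exp (-3/2) ^ card C"
    by (simp add: m power_mult_distrib power_mult[symmetric] mult.commute exp_of_nat_mult)
  moreover have "(kappa / sqrt m) ^ card C = exp (-3/2) ^ card C / D"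
    by (simp add: kappa_def D_def power_divide power_mult_distrib)
  moreover have "D > 0" using assms(4) by (simp add: D_def)
  ultimately show ?thesis by (simp add: divide_le_eq mult.commute)
qed

section \<open>The grid and its lines\<close>

text \<open>\<open>grid l m q f\<close> encodes \<open>{0..<q} \<times> {0..<m}\<^sup>f\<close> by writing the last \<open>f\<close> coordinates as the
  lowest digits in base \<open>l\<close>; \<open>lines l m q f\<close> are its axis-parallel lines.\<close>

fun grid :: "nat \<Rightarrow> nat \<Rightarrow> nat \<Rightarrow> nat \<Rightarrow> nat set" where
  "grid l m q 0 = {0..<q}"
| "grid l m q (Suc f) = (\<lambda>(u, i). u * l + i) ` (grid l m q f \<times> {0..<m})"

fun lines :: "nat \<Rightarrow> nat \<Rightarrow> nat \<Rightarrow> nat \<Rightarrow> nat set set" where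
  "lines l m q 0 = {}"
| "lines l m q (Suc f) = (\<lambda>u. (\<lambda>i. u * l + i) ` {0..<m}) ` grid l m q f
     \<union> (\<lambda>(L, i). (\<lambda>u. u * l + i) ` L) ` (lines l m q f \<times> {0..<m})"

text \<open>Lines are kept as images of translations instead of being normalised to intervals.\<close>

declare image_add_atLeastLessThan[simp del] image_add_atLeastLessThan'[simp del]

lemma grid_SucE:
  assumes "v \<in> grid l m q (Suc f)"
  obtains u i where "u \<in> grid l m q f" "i < m" "v = u * l + i"
  using assms by fastforce

lemma lines_SucE:
  assumes "L \<in> lines l m q (Suc f)"
  obtains (new) u where "u \<in> grid l m q f" "L = (\<lambda>i. u * l + i) ` {0..<m}"
    | (lifted) L' i where "L' \<in> lines l m q f" "i < m" "L = (\<lambda>u. u * l + i) ` L'"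
  using assms by auto

lemma mult_add_digit_eq_iff:
  fixes l :: nat
  assumes "i < l" "i' < l"
  shows "u * l + i = u' * l + i' \<longleftrightarrow> u = u' \<and> i = i'"
proof
  assume "u * l + i = u' * l + i'"
  then have "(u * l + i) div l = (u' * l + i') div l" "(u * l + i) mod l = (u' * l + i') mod l"
    by simp_all
  then show "u = u' \<and> i = i'" using assms by simp
qed simp

lemma new_line_in_lines: "u \<in> grid l m q f \<Longrightarrow> (\<lambda>i. u * l + i) ` {0..<m} \<in> lines l m q (Suc f)"
  by simp

lemma lifted_line_in_lines: "L \<in> lines l m q f \<Longrightarrow> i < m \<Longrightarrow> (\<lambda>u. u * l + i) ` L \<in> lines l m q (Suc f)"
  by (auto intro!: image_eqI[where x="(L, i)"])

lemma grid_subset: "m \<le> l \<Longrightarrow> grid l m q f \<subseteq> {0..<q * l ^ f}"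
proof (induction f)
  case (Suc f)
  have "u * l + i < q * l ^ Suc f" if "u < q * l ^ f" "i < m" for u i
  proof -
    have "u * l + i < (u + 1) * l" using that Suc.prems by simp
    also have "\<dots> \<le> q * l ^ f * l" using that by (intro mult_right_mono) auto
    finally show ?thesis by (simp add: mult.commute mult.left_commute)
  qed
  then show ?case using Suc by fastforce
qed simp

lemma finite_grid: "finite (grid l m q f)"
  by (induction f) auto

lemma card_grid: "m \<le> l \<Longrightarrow> card (grid l m q f) = q * m ^ f"
proof (induction f)
  case (Suc f)
  have "inj_on (\<lambda>(u, i). u * l + i) (grid l m q f \<times> {0..<m})"
    using Suc.prems by (auto simp: inj_on_def mult_add_digit_eq_iff)
  then show ?case
    using Suc finite_grid by (simp add: card_image card_cartesian_product)
qed simp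

lemma finite_lines: "finite (lines l m q f)"
  by (induction f) (auto simp: finite_grid)

lemma line_subset_grid: "L \<in> lines l m q f \<Longrightarrow> L \<subseteq> grid l m q f"
proof (induction f arbitrary: L)
  case (Suc f)
  from Suc.prems show ?case
    by (cases rule: lines_SucE) (use Suc.IH in fastforce)+
qed simp

lemma card_line_le: "L \<in> lines l m q f \<Longrightarrow> card L \<le> m"
proof (induction f arbitrary: L)
  case (Suc f)
  from Suc.prems show ?case
  proof (cases rule: lines_SucE)
    case (new u)
    then show ?thesis using card_image_le[of "{0..<m}" "\<lambda>i. u * l + i"] by simp
  next
    case (lifted L' i)
    then show ?thesis
      using Suc.IH card_image_le[of L' "\<lambda>u. u * l + i"] finite_subset[OF line_subset_grid finite_grid]
      by fastforce
  qed
qed simp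

text \<open>A point lies on at most one new line, and on the lifted lines through the point obtained by
  deleting its last digit.\<close>

lemma card_lines_containing_le:
  assumes "m \<le> l"
  shows "card {L \<in> lines l m q f. v \<in> L} \<le> f"
proof (induction f arbitrary: v)
  case (Suc f)
  define lift where "lift L = (\<lambda>u. u * l + v mod l) ` L" for L
  let ?prev = "{L \<in> lines l m q f. v div l \<in> L}"
  have "{L \<in> lines l m q (Suc f). v \<in> L} \<subseteq> insert ((\<lambda>i. v div l * l + i) ` {0..<m}) (lift ` ?prev)"
  proof
    fix L assume "L \<in> {L \<in> lines l m q (Suc f). v \<in> L}"
    then have L: "L \<in> lines l m q (Suc f)" "v \<in> L" by simp_all
    from L(1) show "L \<in> insert ((\<lambda>i. v div l * l + i) ` {0..<m}) (lift ` ?prev)"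
    proof (cases rule: lines_SucE)
      case (new u)
      then show ?thesis using L(2) assms by auto
    next
      case (lifted L' i)
      then obtain u where "u \<in> L'" "v = u * l + i" using L(2) by auto
      then show ?thesis using lifted assms by (auto simp: lift_def)
    qed
  qed
  then have "card {L \<in> lines l m q (Suc f). v \<in> L} \<le> card (insert ((\<lambda>i. v div l * l + i) ` {0..<m}) (lift ` ?prev))"
    by (rule card_mono[rotated]) (simp add: finite_lines)
  also have "\<dots> \<le> Suc (card ?prev)"
    using card_insert_le_m1[of 1 "lift ` ?prev"] card_image_le[of ?prev lift]
    by (simp add: finite_lines card_insert_if)
  also have "\<dots> \<le> Suc f" using Suc.IH by simp
  finally show ?case .
qed simp

definition slice :: "nat \<Rightarrow> nat set \<Rightarrow> nat \<Rightarrow> nat set" where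
  "slice l D i = {u. u * l + i \<in> D}"

lemma slice_subset_grid:
  assumes "m \<le> l" "D \<subseteq> grid l m q (Suc f)" "i < m"
  shows "slice l D i \<subseteq> grid l m q f"
  using assms by (auto simp: slice_def mult_add_digit_eq_iff)

lemma card_eq_sum_card_slice:
  assumes "m \<le> l" "D \<subseteq> grid l m q (Suc f)"
  shows "card D = (\<Sum>i<m. card (slice l D i))"
proof -
  have finite: "finite (slice l D i)" if "i < m" for i
    using slice_subset_grid[OF assms that] finite_grid finite_subset by blast
  have "D = (\<Union>i<m. (\<lambda>u. u * l + i) ` slice l D i)"
  proof
    show "D \<subseteq> (\<Union>i<m. (\<lambda>u. u * l + i) ` slice l D i)"
    proof
      fix x assume "x \<in> D"
      with assms(2) obtain u i where "i < m" "x = u * l + i" by (blast elim: grid_SucE)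
      with \<open>x \<in> D\<close> show "x \<in> (\<Union>i<m. (\<lambda>u. u * l + i) ` slice l D i)"
        by (auto simp: slice_def)
    qed
  qed (auto simp: slice_def)
  also have "card \<dots> = (\<Sum>i<m. card ((\<lambda>u. u * l + i) ` slice l D i))"
    using assms(1) finite by (intro card_UN_disjoint) (auto simp: mult_add_digit_eq_iff)
  also have "\<dots> = (\<Sum>i<m. card (slice l D i))"
    using assms(1) by (intro sum.cong refl card_image) (auto simp: inj_on_def mult_add_digit_eq_iff)
  finally show ?thesis .
qed

lemma card_slice_add_card_slice_le:
  assumes "m \<le> l" "D \<subseteq> grid l m q (Suc f)" "i < m" "j < m" "i \<noteq> j"
  shows "card (slice l D i) + card (slice l D j) \<le> card D"
proof -
  have "card (slice l D i) + card (slice l D j) = (\<Sum>k\<in>{i, j}. card (slice l D k))"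
    using assms(5) by simp
  also have "\<dots> \<le> (\<Sum>k<m. card (slice l D k))"
    using assms(3,4) by (intro sum_mono2) auto
  also have "\<dots> = card D"
    using card_eq_sum_card_slice[OF assms(1,2)] by simp
  finally show ?thesis .
qed

lemma card_lifted_line_Int:
  assumes "i < m" "m \<le> l"
  shows "card ((\<lambda>u. u * l + i) ` L \<inter> D) = card (L \<inter> slice l D i)"
proof -
  have "(\<lambda>u. u * l + i) ` L \<inter> D = (\<lambda>u. u * l + i) ` (L \<inter> slice l D i)"
    by (auto simp: slice_def)
  then show ?thesis
    using assms by (simp add: card_image inj_on_def mult_add_digit_eq_iff)
qed

text \<open>If some slice is nonempty but small, a line meeting it once lifts; otherwise the size bound
  leaves a single nonempty slice, and a new line through a point of \<open>D\<close> meets \<open>D\<close> only there.\<close>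

lemma line_meeting_once:
  assumes "m \<le> l" "D \<subseteq> grid l m q f" "D \<noteq> {}" "card D < 2 ^ f"
  shows "\<exists>L\<in>lines l m q f. card (L \<inter> D) = 1"
  using assms(2-)
proof (induction f arbitrary: D)
  case 0
  then show ?case using finite_subset[of D "{0..<q}"] by simp
next
  case (Suc f)
  show ?case
  proof (cases "\<exists>i<m. slice l D i \<noteq> {} \<and> card (slice l D i) < 2 ^ f")
    case True
    then obtain i where i: "i < m" "slice l D i \<noteq> {}" "card (slice l D i) < 2 ^ f"
      by blast
    obtain L' where L': "L' \<in> lines l m q f" "card (L' \<inter> slice l D i) = 1"
      using Suc.IH[OF slice_subset_grid[OF assms(1) Suc.prems(1) i(1)] i(2,3)] by blast
    then have "card ((\<lambda>u. u * l + i) ` L' \<inter> D) = 1"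
      using card_lifted_line_Int[OF i(1) assms(1)] by simp
    moreover have "(\<lambda>u. u * l + i) ` L' \<in> lines l m q (Suc f)"
      using L'(1) i(1) by (rule lifted_line_in_lines)
    ultimately show ?thesis by blast
  next
    case False
    obtain v where "v \<in> D" using Suc.prems(2) by blast
    with Suc.prems(1) obtain u i where u: "u \<in> grid l m q f" "i < m" "u * l + i \<in> D"
      by (blast elim: grid_SucE)
    have big: "2 ^ f \<le> card (slice l D k)" if "k < m" "slice l D k \<noteq> {}" for k
      using False that not_less by blast
    have empty: "slice l D j = {}" if j: "j < m" "j \<noteq> i" for j
    proof (rule ccontr)
      assume "slice l D j \<noteq> {}"
      then have "2 ^ f + 2 ^ f \<le> card (slice l D j) + card (slice l D i)"
        using big j u(2,3) by (intro add_mono) (auto simp: slice_def)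
      also have "\<dots> \<le> card D"
        using card_slice_add_card_slice_le[OF assms(1) Suc.prems(1) j(1) u(2) j(2)] .
      finally show False using Suc.prems(3) by simp
    qed
    have "(\<lambda>j. u * l + j) ` {0..<m} \<inter> D = {u * l + i}"
    proof (intro equalityI subsetI)
      fix x assume "x \<in> (\<lambda>j. u * l + j) ` {0..<m} \<inter> D"
      then obtain j where "j < m" "x = u * l + j" "u \<in> slice l D j"
        by (auto simp: slice_def)
      then show "x \<in> {u * l + i}" using empty by blast
    qed (use u in auto)
    then show ?thesis using new_line_in_lines[OF u(1)] by (intro bexI) auto
  qed
qed

section \<open>Balanced assignments\<close>

lemma mem_assignments_iff:
  "S \<in> assignments N \<longleftrightarrow> (\<forall>v<N. S v = 1 \<or> S v = -1) \<and> (\<forall>v. N \<le> v \<longrightarrow> S v = undefined)"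
  by (auto simp: assignments_def PiE_def Pi_def extensional_def)

lemma finite_assignments: "finite (assignments N)"
  by (simp add: assignments_def finite_PiE)

lemma card_assignments: "card (assignments N) = 2 ^ N"
  by (simp add: assignments_def card_PiE numeral_2_eq_2)

definition balanced :: "nat \<Rightarrow> nat set \<Rightarrow> nat set set \<Rightarrow> (nat \<Rightarrow> int) set" where
  "balanced N G Ls = {S \<in> assignments N. (\<forall>v<N. v \<notin> G \<longrightarrow> S v = -1) \<and> (\<forall>L\<in>Ls. (\<Sum>v\<in>L. S v) = 0)}"

lemma finite_balanced: "finite (balanced N G Ls)"
  by (simp add: balanced_def finite_assignments)

lemma flip_on_balanced:
  assumes "S \<in> balanced N G Ls" "G \<subseteq> {..<N}" "\<And>L. L \<in> Ls \<Longrightarrow> L \<subseteq> G"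
  shows "flip_on G S \<in> balanced N G Ls"
proof -
  have "(\<Sum>v\<in>L. flip_on G S v) = (\<Sum>v\<in>L. - S v)" if "L \<in> Ls" for L
    using assms(3)[OF that] by (intro sum.cong) (auto simp: flip_on_def)
  then show ?thesis
    using assms(1,2) by (auto simp: balanced_def mem_assignments_iff flip_on_def sum_negf)
qed

abbreviation grid_balanced :: "nat \<Rightarrow> nat \<Rightarrow> nat \<Rightarrow> nat \<Rightarrow> (nat \<Rightarrow> int) set" where
  "grid_balanced l m q f \<equiv> balanced (q * l ^ f) (grid l m q f) (lines l m q f)"

definition interleave :: "nat \<Rightarrow> nat \<Rightarrow> nat \<Rightarrow> (nat \<Rightarrow> nat \<Rightarrow> int) \<Rightarrow> nat \<Rightarrow> int" where
  "interleave l m N A = (\<lambda>v\<in>{0..<N * l}. if v mod l < m then A (v mod l) (v div l) else -1)"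

lemma interleave_digit:
  assumes "m \<le> l" "u < N" "i < m"
  shows "interleave l m N A (u * l + i) = A i u"
proof -
  have "u * l + i < (u + 1) * l" using assms by simp
  also have "\<dots> \<le> N * l" using assms by (intro mult_right_mono) auto
  finally show ?thesis using assms by (simp add: interleave_def)
qed

lemma inj_on_interleave:
  assumes "m \<le> l"
  shows "inj_on (interleave l m N) ({0..<m} \<rightarrow>\<^sub>E assignments N)"
proof (rule inj_onI)
  fix A B assume A: "A \<in> {0..<m} \<rightarrow>\<^sub>E assignments N" and B: "B \<in> {0..<m} \<rightarrow>\<^sub>E assignments N"
    and eq: "interleave l m N A = interleave l m N B"
  have "A i u = B i u" if "i < m" for i u
  proof (cases "u < N")
    case True
    then show ?thesis using fun_cong[OF eq, of "u * l + i"] interleave_digit assms that by metis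
  next
    case False
    then show ?thesis using A B that by (auto simp: PiE_iff mem_assignments_iff)
  qed
  then show "A = B"
    using A B by (intro PiE_ext[of _ "{0..<m}" "\<lambda>_. assignments N"]) auto
qed

lemma sum_interleave_line:
  assumes ml: "m \<le> l" and A: "A \<in> zero_sum_tuples m (grid_balanced l m q f) (grid l m q f)"
    and "L \<in> lines l m q (Suc f)"
  shows "(\<Sum>v\<in>L. interleave l m (q * l ^ f) A v) = 0"
  using assms(3)
proof (cases rule: lines_SucE)
  case (new u)
  have "u < q * l ^ f" using new(1) grid_subset[OF ml, of q f] by auto
  have "(\<Sum>v\<in>L. interleave l m (q * l ^ f) A v) = (\<Sum>i<m. interleave l m (q * l ^ f) A (u * l + i))"
    using new by (simp add: sum.reindex inj_on_def atLeast0LessThan)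
  also have "\<dots> = (\<Sum>i<m. A i u)"
    using interleave_digit[OF ml \<open>u < q * l ^ f\<close>] by simp
  also have "\<dots> = 0"
    using A new(1) by (simp add: zero_sum_tuples_def)
  finally show ?thesis .
next
  case (lifted L' i)
  have "L' \<subseteq> {..<q * l ^ f}"
    using line_subset_grid[OF lifted(1)] grid_subset[OF ml, of q f] by auto
  have "(\<Sum>v\<in>L. interleave l m (q * l ^ f) A v) = (\<Sum>u\<in>L'. interleave l m (q * l ^ f) A (u * l + i))"
    using lifted ml by (simp add: sum.reindex inj_on_def)
  also have "\<dots> = (\<Sum>u\<in>L'. A i u)"
    using interleave_digit[OF ml _ lifted(2)] \<open>L' \<subseteq> {..<q * l ^ f}\<close> by (intro sum.cong) auto
  also have "\<dots> = 0"
    using A lifted(1,2) by (auto simp: zero_sum_tuples_def balanced_def PiE_iff)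
  finally show ?thesis .
qed

lemma interleave_in_grid_balanced:
  assumes ml: "m \<le> l" and A: "A \<in> zero_sum_tuples m (grid_balanced l m q f) (grid l m q f)"
  shows "interleave l m (q * l ^ f) A \<in> grid_balanced l m q (Suc f)"
proof -
  define N where "N = q * l ^ f"
  define S where "S = interleave l m N A"
  have N: "q * l ^ Suc f = N * l" by (simp add: N_def)
  have row: "A i \<in> grid_balanced l m q f" if "i < m" for i
    using A that by (auto simp: zero_sum_tuples_def)
  have div_N: "v div l < N" if "v < N * l" for v
    using that by (simp add: less_mult_imp_div_less)
  have "S \<in> assignments (N * l)"
    using row div_N
    by (auto simp: S_def interleave_def mem_assignments_iff balanced_def N_def)
  moreover have "S v = -1" if "v < N * l" "v \<notin> grid l m q (Suc f)" for v
  proof (cases "v mod l < m")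
    case True
    have "v div l \<notin> grid l m q f"
    proof
      assume "v div l \<in> grid l m q f"
      then have "v div l * l + v mod l \<in> grid l m q (Suc f)"
        using True by (auto intro!: image_eqI[where x="(v div l, v mod l)"])
      then show False using that(2) by simp
    qed
    then show ?thesis
      using row[OF True] div_N[OF that(1)] that(1) True
      by (auto simp: S_def interleave_def balanced_def N_def)
  qed (use that in \<open>simp add: S_def interleave_def\<close>)
  moreover have "(\<Sum>v\<in>L. S v) = 0" if "L \<in> lines l m q (Suc f)" for L
    using sum_interleave_line[OF ml A that] by (simp add: S_def N_def)
  ultimately show ?thesis
    unfolding balanced_def N N_def[symmetric] S_def[symmetric] by blast
qed

lemma card_grid_balanced_Suc_ge:
  assumes ml: "m \<le> l" and m: "even m" "0 < m"
  shows "real (card (grid_balanced l m q f)) ^ m * (kappa / sqrt m) ^ (q * m ^ f)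
    \<le> card (grid_balanced l m q (Suc f))"
proof -
  let ?X = "grid_balanced l m q f" and ?G = "grid l m q f"
  have G: "?G \<subseteq> {..<q * l ^ f}" using grid_subset[OF ml, of q f] by auto
  have unit: "\<bar>S x\<bar> = 1" if "S \<in> ?X" "x \<in> ?G" for S x
    using that G by (auto simp: balanced_def mem_assignments_iff)
  have flip: "flip_on ?G S \<in> ?X" if "S \<in> ?X" for S
    using flip_on_balanced[OF that G line_subset_grid] .
  have "real (card ?X) ^ m * (kappa / sqrt m) ^ (q * m ^ f) \<le> card (zero_sum_tuples m ?X ?G)"
    using card_zero_sum_tuples_ge[of ?X ?G m] finite_balanced finite_grid m unit flip
    by (simp add: card_grid[OF ml])
  also have "card (zero_sum_tuples m ?X ?G) \<le> card (grid_balanced l m q (Suc f))"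
  proof (rule card_inj_on_le[OF _ _ finite_balanced])
    have "zero_sum_tuples m ?X ?G \<subseteq> {0..<m} \<rightarrow>\<^sub>E assignments (q * l ^ f)"
      by (auto simp: zero_sum_tuples_def balanced_def PiE_iff extensional_def)
    then show "inj_on (interleave l m (q * l ^ f)) (zero_sum_tuples m ?X ?G)"
      using inj_on_interleave[OF ml] by (rule inj_on_subset[rotated])
    show "interleave l m (q * l ^ f) ` zero_sum_tuples m ?X ?G \<subseteq> grid_balanced l m q (Suc f)"
      using interleave_in_grid_balanced[OF ml] by blast
  qed
  finally show ?thesis by simp
qed

lemma card_grid_balanced_ge:
  assumes "m \<le> l" "even m" "0 < m"
  shows "2 powr (real q * real m ^ f * (1 + real f * log 2 (kappa / sqrt m) / m))
    \<le> card (grid_balanced l m q f)"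
proof (induction f)
  case 0
  then show ?case by (simp add: card_assignments balanced_def powr_realpow)
next
  case (Suc f)
  define rate where "rate = log 2 (kappa / sqrt m)"
  define e where "e = real q * real m ^ f * (1 + real f * rate / m)"
  have rate: "kappa / sqrt m = 2 powr rate"
    using kappa_pos assms by (simp add: rate_def)
  have "real q * real m ^ Suc f * (1 + real (Suc f) * rate / m) = m * e + real (q * m ^ f) * rate"
    using assms by (simp add: e_def field_simps)
  then have "2 powr (real q * real m ^ Suc f * (1 + real (Suc f) * rate / m))
      = (2 powr e) ^ m * (kappa / sqrt m) ^ (q * m ^ f)"
    by (simp add: rate powr_add powr_powr powr_realpow[symmetric] mult.commute)
  also have "\<dots> \<le> real (card (grid_balanced l m q f)) ^ m * (kappa / sqrt m) ^ (q * m ^ f)"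
    using Suc.IH kappa_pos by (intro mult_right_mono power_mono) (auto simp: e_def rate_def)
  also have "\<dots> \<le> card (grid_balanced l m q (Suc f))"
    by (rule card_grid_balanced_Suc_ge[OF assms])
  finally show ?case by (simp add: rate_def)
qed

section \<open>The Ising instance of a line system\<close>

definition line_couplings :: "nat set set \<Rightarrow> nat \<Rightarrow> nat \<Rightarrow> int" where
  "line_couplings Ls i j = (if i = j then 0 else int (card {L \<in> Ls. i \<in> L \<and> j \<in> L}))"

definition outside_field :: "nat set \<Rightarrow> nat \<Rightarrow> int" where
  "outside_field G v = (if v \<in> G then 0 else 1)"

lemma square_sum_eq_sum_squares_add_pairs:
  fixes x :: "'a::linorder \<Rightarrow> 'b::comm_ring_1"
  assumes "finite A"
  shows "(\<Sum>a\<in>A. x a)\<^sup>2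
    = (\<Sum>a\<in>A. (x a)\<^sup>2) + 2 * (\<Sum>(a, b)\<in>{(a, b). a \<in> A \<and> b \<in> A \<and> a < b}. x a * x b)"
proof -
  define g where "g = (\<lambda>(a, b). x a * x b)"
  define below where "below = {(a, b). a \<in> A \<and> b \<in> A \<and> a < b}"
  have "finite below"
    using assms by (intro finite_subset[of below "A \<times> A"]) (auto simp: below_def)
  then have finite: "finite below" "finite (prod.swap ` below)" by simp_all
  let ?diag = "(\<lambda>a. (a, a)) ` A"
  have split: "A \<times> A = (?diag \<union> below) \<union> prod.swap ` below"
  proof (intro equalityI subsetI)
    fix p assume "p \<in> A \<times> A"
    then obtain a b where p: "p = (a, b)" "a \<in> A" "b \<in> A" by blast
    show "p \<in> (?diag \<union> below) \<union> prod.swap ` below"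
    proof (cases a b rule: linorder_cases)
      case greater
      then have "p = prod.swap (b, a)" "(b, a) \<in> below" using p by (simp_all add: below_def)
      then show ?thesis by blast
    qed (use p in \<open>auto simp: below_def\<close>)
  qed (auto simp: below_def)
  have disjoint: "(?diag \<union> below) \<inter> prod.swap ` below = {}"
    by (auto simp: below_def)
  have "(\<Sum>p\<in>A \<times> A. g p) = (\<Sum>p\<in>?diag \<union> below. g p) + (\<Sum>p\<in>prod.swap ` below. g p)"
    unfolding split by (rule sum.union_disjoint) (use assms finite disjoint in simp_all)
  also have "(\<Sum>p\<in>?diag \<union> below. g p) = (\<Sum>p\<in>?diag. g p) + (\<Sum>p\<in>below. g p)"
    using assms finite by (intro sum.union_disjoint) (auto simp: below_def)
  also have "(\<Sum>p\<in>prod.swap ` below. g p) = (\<Sum>p\<in>below. g p)"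
    by (simp add: sum.reindex g_def case_prod_beta mult.commute)
  also have "(\<Sum>p\<in>?diag. g p) = (\<Sum>a\<in>A. (x a)\<^sup>2)"
    by (simp add: sum.reindex inj_on_def g_def power2_eq_square)
  finally have "(\<Sum>p\<in>A \<times> A. g p) = (\<Sum>a\<in>A. (x a)\<^sup>2) + (\<Sum>p\<in>below. g p) + (\<Sum>p\<in>below. g p)" .
  moreover have "(\<Sum>a\<in>A. x a)\<^sup>2 = (\<Sum>p\<in>A \<times> A. g p)"
    by (simp add: power2_eq_square sum_product sum.cartesian_product g_def)
  ultimately show ?thesis
    by (simp add: g_def below_def)
qed

lemma sum_pairs_line_couplings:
  fixes S :: "nat \<Rightarrow> int"
  assumes "finite Ls" and lines: "\<And>L. L \<in> Ls \<Longrightarrow> L \<subseteq> {..<N}"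
    and unit: "\<And>v. v < N \<Longrightarrow> S v = 1 \<or> S v = -1"
  shows "2 * (\<Sum>(i, j)\<in>{(i, j). i < j \<and> j < N}. line_couplings Ls i j * S i * S j)
    = (\<Sum>L\<in>Ls. (\<Sum>v\<in>L. S v)\<^sup>2 - int (card L))"
proof -
  define P where "P = {(i, j). i < j \<and> j < N}"
  define pairs where "pairs L = {(a, b). a \<in> L \<and> b \<in> L \<and> a < b}" for L :: "nat set"
  have "finite P"
    by (rule finite_subset[of _ "{..<N} \<times> {..<N}"]) (auto simp: P_def)
  have coupling: "line_couplings Ls i j * S i * S j = (\<Sum>L\<in>Ls. if i \<in> L \<and> j \<in> L then S i * S j else 0)"
    if "(i, j) \<in> P" for i j
    using that assms(1) by (simp add: P_def line_couplings_def sum.If_cases Int_def)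
  have pairs_of_line: "(\<Sum>(i, j)\<in>P. if i \<in> L \<and> j \<in> L then S i * S j else 0) = (\<Sum>(a, b)\<in>pairs L. S a * S b)"
    if "L \<in> Ls" for L
  proof -
    have "pairs L = {p \<in> P. fst p \<in> L \<and> snd p \<in> L}"
      using lines[OF that] by (auto simp: P_def pairs_def)
    then show ?thesis
      using \<open>finite P\<close> by (simp add: sum.inter_filter case_prod_beta)
  qed
  have square: "(\<Sum>v\<in>L. S v)\<^sup>2 - int (card L) = 2 * (\<Sum>(a, b)\<in>pairs L. S a * S b)"
    if "L \<in> Ls" for L
  proof -
    have "finite L" using lines[OF that] finite_subset by blast
    moreover have "(S v)\<^sup>2 = 1" if "v \<in> L" for v
      using lines[OF \<open>L \<in> Ls\<close>] unit that by fastforce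
    then have "(\<Sum>v\<in>L. (S v)\<^sup>2) = int (card L)" by simp
    ultimately show ?thesis
      using square_sum_eq_sum_squares_add_pairs[of L S] by (simp add: pairs_def)
  qed
  have "(\<Sum>(i, j)\<in>P. line_couplings Ls i j * S i * S j)
      = (\<Sum>(i, j)\<in>P. \<Sum>L\<in>Ls. if i \<in> L \<and> j \<in> L then S i * S j else 0)"
    using coupling by (intro sum.cong) auto
  also have "\<dots> = (\<Sum>L\<in>Ls. \<Sum>(i, j)\<in>P. if i \<in> L \<and> j \<in> L then S i * S j else 0)"
    by (simp add: case_prod_beta sum.swap[of _ P])
  also have "\<dots> = (\<Sum>L\<in>Ls. \<Sum>(a, b)\<in>pairs L. S a * S b)"
    by (rule sum.cong[OF refl]) (rule pairs_of_line)
  finally show ?thesis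
    by (simp add: P_def[symmetric] sum_distrib_left square)
qed

definition ground_energy :: "nat \<Rightarrow> nat set \<Rightarrow> nat set set \<Rightarrow> real" where
  "ground_energy N G Ls = - card ({..<N} - G) / 4 - (\<Sum>L\<in>Ls. real (card L)) / 8"

lemma energy_line_couplings:
  assumes "finite Ls" "\<And>L. L \<in> Ls \<Longrightarrow> L \<subseteq> G" "G \<subseteq> {..<N}" "S \<in> assignments N"
  shows "energy N (outside_field G) (line_couplings Ls) S = ground_energy N G Ls
    + real_of_int (\<Sum>v\<in>{..<N} - G. S v + 1) / 4 + real_of_int (\<Sum>L\<in>Ls. (\<Sum>v\<in>L. S v)\<^sup>2) / 8"
proof -
  have field: "(\<Sum>i<N. real_of_int (outside_field G i * S i)) = (\<Sum>v\<in>{..<N} - G. real_of_int (S v))"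
  proof -
    have "(\<Sum>i<N. real_of_int (outside_field G i * S i)) = (\<Sum>i<N. if i \<notin> G then real_of_int (S i) else 0)"
      by (intro sum.cong) (auto simp: outside_field_def)
    then show ?thesis
      by (simp add: sum.inter_filter[symmetric] set_diff_eq)
  qed
  have pairs: "2 * (\<Sum>(i, j)\<in>{(i, j). i < j \<and> j < N}. line_couplings Ls i j * S i * S j)
      = (\<Sum>L\<in>Ls. (\<Sum>v\<in>L. S v)\<^sup>2 - int (card L))"
    using assms by (intro sum_pairs_line_couplings) (auto simp: mem_assignments_iff)
  have couplings: "(\<Sum>(i, j)\<in>{(i, j). i < j \<and> j < N}. real_of_int (line_couplings Ls i j * S i * S j))
      = (\<Sum>L\<in>Ls. real_of_int ((\<Sum>v\<in>L. S v)\<^sup>2) - real (card L)) / 2"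
    using arg_cong[OF pairs, of real_of_int] by (simp add: case_prod_beta)
  show ?thesis
    unfolding energy_def field couplings ground_energy_def
    by (simp add: sum.distrib sum_subtractf field_simps)
qed

lemma ground_energy_le_energy:
  assumes "finite Ls" "\<And>L. L \<in> Ls \<Longrightarrow> L \<subseteq> G" "G \<subseteq> {..<N}" "S \<in> assignments N"
  shows "ground_energy N G Ls \<le> energy N (outside_field G) (line_couplings Ls) S"
    and "energy N (outside_field G) (line_couplings Ls) S = ground_energy N G Ls \<longleftrightarrow> S \<in> balanced N G Ls"
proof -
  define a where "a = (\<Sum>v\<in>{..<N} - G. S v + 1)"
  define b where "b = (\<Sum>L\<in>Ls. (\<Sum>v\<in>L. S v)\<^sup>2)"
  have nonneg: "\<forall>v\<in>{..<N} - G. 0 \<le> S v + 1"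
    using assms(4) by (force simp: mem_assignments_iff)
  have a: "0 \<le> a" "a = 0 \<longleftrightarrow> (\<forall>v<N. v \<notin> G \<longrightarrow> S v = -1)"
    using nonneg sum_nonneg_eq_0_iff[of "{..<N} - G" "\<lambda>v. S v + 1"]
    by (auto simp: a_def eq_neg_iff_add_eq_0 intro: sum_nonneg)
  have b: "0 \<le> b" "b = 0 \<longleftrightarrow> (\<forall>L\<in>Ls. (\<Sum>v\<in>L. S v) = 0)"
    using assms(1) sum_nonneg_eq_0_iff[of Ls "\<lambda>L. (\<Sum>v\<in>L. S v)\<^sup>2"]
    by (auto simp: b_def intro: sum_nonneg)
  have energy: "energy N (outside_field G) (line_couplings Ls) S
      = ground_energy N G Ls + real_of_int a / 4 + real_of_int b / 8"
    unfolding a_def b_def by (rule energy_line_couplings[OF assms])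
  show "ground_energy N G Ls \<le> energy N (outside_field G) (line_couplings Ls) S"
    using a b energy by simp
  show "energy N (outside_field G) (line_couplings Ls) S = ground_energy N G Ls \<longleftrightarrow> S \<in> balanced N G Ls"
    using a b energy assms(4) by (auto simp: balanced_def)
qed

lemma ising_instance_line_couplings: "ising_instance N h (line_couplings Ls)"
  by (auto simp: ising_instance_def line_couplings_def conj_commute)

lemma vertex_degree_line_couplings_le:
  assumes "finite Ls" "\<And>L. L \<in> Ls \<Longrightarrow> finite L" "\<And>L. L \<in> Ls \<Longrightarrow> card L \<le> m"
    and "card {L \<in> Ls. i \<in> L} \<le> f"
  shows "vertex_degree N (line_couplings Ls) i \<le> f * (m - 1)"
proof -
  define I where "I = {L \<in> Ls. i \<in> L}"
  have "{j. j < N \<and> j \<noteq> i \<and> line_couplings Ls i j \<noteq> 0} \<subseteq> (\<Union>L\<in>I. L - {i})"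
  proof
    fix j assume "j \<in> {j. j < N \<and> j \<noteq> i \<and> line_couplings Ls i j \<noteq> 0}"
    then have "j \<noteq> i" and "card {L \<in> Ls. i \<in> L \<and> j \<in> L} \<noteq> 0"
      by (auto simp: line_couplings_def)
    moreover from this(2) have "{L \<in> Ls. i \<in> L \<and> j \<in> L} \<noteq> {}"
      by (rule contrapos_nn) (simp only: card.empty)
    ultimately
    show "j \<in> (\<Union>L\<in>I. L - {i})" by (auto simp: I_def)
  qed
  moreover have "finite (\<Union>L\<in>I. L - {i})"
    using assms(1,2) by (intro finite_UN_I) (auto simp: I_def)
  ultimately have "vertex_degree N (line_couplings Ls) i \<le> card (\<Union>L\<in>I. L - {i})"
    unfolding vertex_degree_def by (rule card_mono[rotated])
  also have "\<dots> \<le> (\<Sum>L\<in>I. card (L - {i}))"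
    by (rule card_UN_le) (simp add: I_def assms(1))
  also have "\<dots> \<le> (\<Sum>L\<in>I. m - 1)"
    using assms(2,3) by (intro sum_mono) (simp add: I_def card_Diff_singleton diff_le_mono)
  also have "\<dots> \<le> f * (m - 1)"
    using assms(4) by (simp add: I_def)
  finally show ?thesis .
qed

lemma global_min_line_couplings_iff:
  assumes "finite Ls" "\<And>L. L \<in> Ls \<Longrightarrow> L \<subseteq> G" "G \<subseteq> {..<N}" "balanced N G Ls \<noteq> {}"
  shows "global_min N (outside_field G) (line_couplings Ls) A \<longleftrightarrow> A \<in> balanced N G Ls"
proof -
  let ?H = "energy N (outside_field G) (line_couplings Ls)"
  have ground: "ground_energy N G Ls \<le> ?H S" "?H S = ground_energy N G Ls \<longleftrightarrow> S \<in> balanced N G Ls"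
    if "S \<in> assignments N" for S
    using ground_energy_le_energy[of Ls G N S, OF assms(1) assms(2) assms(3) that] by simp_all
  obtain B where B: "B \<in> balanced N G Ls" using assms(4) by blast
  then have "B \<in> assignments N" by (simp add: balanced_def)
  show ?thesis
  proof
    assume "global_min N (outside_field G) (line_couplings Ls) A"
    then have "A \<in> assignments N" "?H A \<le> ?H B"
      using \<open>B \<in> assignments N\<close> by (auto simp: global_min_def)
    then show "A \<in> balanced N G Ls"
      using ground[of A] ground[OF \<open>B \<in> assignments N\<close>] B by auto
  next
    assume A: "A \<in> balanced N G Ls"
    then have "A \<in> assignments N" by (simp add: balanced_def)
    moreover have "?H A = ground_energy N G Ls"
      using ground(2)[OF \<open>A \<in> assignments N\<close>] A by simp
    ultimately show "global_min N (outside_field G) (line_couplings Ls) A"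
      using ground(1) by (simp add: global_min_def)
  qed
qed

text \<open>Flipping the variables of \<open>D\<close> changes the sum along a line meeting \<open>D\<close> exactly once.\<close>

lemma less_hamming_balanced:
  assumes A: "A \<in> balanced N G Ls" and S: "S \<in> balanced N G Ls" and "1 \<le> hamming N A S"
    and lines: "\<And>L. L \<in> Ls \<Longrightarrow> L \<subseteq> {..<N}"
    and meets: "\<And>D. D \<subseteq> G \<Longrightarrow> D \<noteq> {} \<Longrightarrow> card D \<le> k \<Longrightarrow> \<exists>L\<in>Ls. card (L \<inter> D) = 1"
  shows "k < hamming N A S"
proof (rule ccontr)
  define D where "D = {i. i < N \<and> A i \<noteq> S i}"
  assume "\<not> k < hamming N A S"
  moreover have "hamming N A S = card D" by (simp add: hamming_def D_def)
  ultimately have D: "D \<noteq> {}" "card D \<le> k"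
    using assms(3) by auto
  show False
  proof (cases "D \<subseteq> G")
    case False
    then obtain v where v: "v < N" "v \<notin> G" "A v \<noteq> S v" unfolding D_def by blast
    moreover have "A v = -1" "S v = -1"
      using A S v(1,2) by (simp_all add: balanced_def)
    ultimately show False by simp
  next
    case True
    obtain L where L: "L \<in> Ls" "card (L \<inter> D) = 1" using meets[OF True D] by blast
    from L(2) obtain v where v: "L \<inter> D = {v}" by (rule card_1_singletonE)
    then have "v \<in> D" by blast
    have "finite L" using lines[OF L(1)] finite_subset by blast
    have "(\<Sum>x\<in>L. S x - A x) = (\<Sum>x\<in>L \<inter> D. S x - A x) + (\<Sum>x\<in>L - D. S x - A x)"
      using \<open>finite L\<close> by (rule sum.Int_Diff)
    also have "(\<Sum>x\<in>L - D. S x - A x) = 0"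
      using lines[OF L(1)] by (intro sum.neutral) (auto simp: D_def)
    finally have "(\<Sum>x\<in>L. S x) - (\<Sum>x\<in>L. A x) = S v - A v"
      using v by (simp add: sum_subtractf)
    moreover have "S v \<noteq> A v" using \<open>v \<in> D\<close> by (simp add: D_def)
    moreover have "(\<Sum>x\<in>L. S x) = 0" "(\<Sum>x\<in>L. A x) = 0"
      using A S L(1) by (simp_all add: balanced_def)
    ultimately show False by simp
  qed
qed

lemma global_min_line_couplings_k_minimum:
  assumes "finite Ls" "\<And>L. L \<in> Ls \<Longrightarrow> L \<subseteq> G" "G \<subseteq> {..<N}" "balanced N G Ls \<noteq> {}"
    and meets: "\<And>D. D \<subseteq> G \<Longrightarrow> D \<noteq> {} \<Longrightarrow> card D \<le> k \<Longrightarrow> \<exists>L\<in>Ls. card (L \<inter> D) = 1"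
    and "global_min N (outside_field G) (line_couplings Ls) A"
  shows "k_minimum N (outside_field G) (line_couplings Ls) k A"
proof -
  let ?H = "energy N (outside_field G) (line_couplings Ls)"
  have ground: "ground_energy N G Ls \<le> ?H S" "?H S = ground_energy N G Ls \<longleftrightarrow> S \<in> balanced N G Ls"
    if "S \<in> assignments N" for S
    using ground_energy_le_energy[of Ls G N S, OF assms(1) assms(2) assms(3) that] by simp_all
  have A: "A \<in> balanced N G Ls"
    using assms(6) global_min_line_couplings_iff[OF assms(1-4)] by blast
  then have "A \<in> assignments N" by (simp add: balanced_def)
  have lines: "L \<subseteq> {..<N}" if "L \<in> Ls" for L
    using assms(2)[OF that] assms(3) by (rule order_trans)
  have "?H A < ?H S"
    if "S \<in> assignments N" "1 \<le> hamming N A S" "hamming N A S \<le> k" for S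
  proof -
    have "S \<notin> balanced N G Ls"
    proof
      assume "S \<in> balanced N G Ls"
      then have "k < hamming N A S"
        using less_hamming_balanced[OF A _ that(2) lines meets] by blast
      with that(3) show False by simp
    qed
    then have "?H S \<noteq> ground_energy N G Ls" using ground(2)[OF that(1)] by simp
    moreover have "?H A = ground_energy N G Ls"
      using ground(2)[OF \<open>A \<in> assignments N\<close>] A by simp
    ultimately show ?thesis using ground(1)[OF that(1)] by simp
  qed
  then show ?thesis
    using \<open>A \<in> assignments N\<close> by (simp add: k_minimum_def)
qed

section \<open>The count of ground states\<close>

lemma power_minus_mult_power_le:
  fixes l :: real
  assumes "1 \<le> l"
  shows "l ^ Suc n - real (Suc n) * l ^ n \<le> (l - 1) ^ Suc n"
proof (induction n)
  case (Suc n)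
  have "(l - 1) * (l ^ Suc n - real (Suc n) * l ^ n) \<le> (l - 1) * (l - 1) ^ Suc n"
    using Suc.IH assms by (intro mult_left_mono) simp_all
  moreover have "(l - 1) * (l ^ Suc n - real (Suc n) * l ^ n)
      = l ^ Suc (Suc n) - real (Suc (Suc n)) * l ^ Suc n + real (Suc n) * l ^ n"
    by (simp add: algebra_simps)
  moreover have "0 \<le> real (Suc n) * l ^ n" using assms by simp
  ultimately show ?case by simp
qed simp

lemma exponent_le:
  fixes l m r r' T :: real
  assumes m: "2 \<le> m" "m \<le> l" "l - 1 \<le> m" and r: "r \<le> 0" "r' \<le> r" and T: "1 - r' \<le> T"
  shows "l ^ Suc n * (1 - real (Suc n) * T / l) \<le> m ^ Suc n * (1 + real (Suc n) * r / m)"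
proof -
  define F where "F = real (Suc n)"
  have "l ^ Suc n - F * l ^ n \<le> (l - 1) ^ Suc n"
    unfolding F_def using m by (intro power_minus_mult_power_le) simp
  also have "\<dots> \<le> m ^ Suc n"
    using m by (intro power_mono) simp_all
  finally have main: "l ^ Suc n - F * l ^ n \<le> m ^ Suc n" .
  have "l ^ n * (1 - r') \<le> l ^ n * T"
    using T m by (intro mult_left_mono) simp_all
  moreover have "l ^ n * r' \<le> m ^ n * r"
  proof -
    have "l ^ n * r' \<le> l ^ n * r" using r m by (intro mult_left_mono) simp_all
    also have "\<dots> \<le> m ^ n * r" using r m by (intro mult_right_mono_neg power_mono) simp_all
    finally show ?thesis .
  qed
  moreover have "F > 0" by (simp add: F_def)
  ultimately have "F * (l ^ n - l ^ n * T) \<le> F * (m ^ n * r)"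
    by (intro mult_left_mono) (simp_all add: algebra_simps)
  moreover have "l ^ Suc n * (1 - F * T / l) = l ^ Suc n - F * l ^ n + F * (l ^ n - l ^ n * T)"
    using m by (simp add: field_simps)
  moreover have "m ^ Suc n * (1 + F * r / m) = m ^ Suc n + F * (m ^ n * r)"
    using m by (simp add: field_simps)
  ultimately show ?thesis
    using main unfolding F_def[symmetric] by linarith
qed

lemma exponent_log_le:
  fixes l m :: nat
  assumes "0 < f" "2 \<le> m" "m \<le> l" "l \<le> m + 1"
  shows "real l ^ f * (1 - real f * log 2 (real f * sqrt l / (kappa / 2)) / l)
    \<le> real m ^ f * (1 + real f * log 2 (kappa / sqrt m) / m)"
proof -
  define T where "T = log 2 (real f * sqrt l / (kappa / 2))"
  define r where "r = log 2 (kappa / sqrt m)"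
  define r' where "r' = log 2 (kappa / sqrt l)"
  obtain n where f: "f = Suc n" using assms(1) by (cases f) auto
  have m: "2 \<le> real m" "real m \<le> l" "real l - 1 \<le> m"
    using assms(2-4) by simp_all
  have "kappa < sqrt m"
    using kappa_less_one m(1) real_sqrt_ge_1_iff[of m] by linarith
  then have r: "r \<le> 0"
    using kappa_pos m(1) by (simp add: r_def divide_le_eq)
  have "r' \<le> r"
    using kappa_pos m(1,2) by (simp add: r_def r'_def frac_le)
  have "T = log 2 (2 * real f) - r'"
    using kappa_pos assms(1) m(1,2) by (simp add: T_def r'_def log_divide_pos[symmetric] field_simps)
  then have "1 - r' \<le> T"
    using assms(1) by (simp add: log_mult_pos)
  then show ?thesis
    using exponent_le[OF m r \<open>r' \<le> r\<close>, of T n] by (simp add: f T_def r_def)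
qed

lemma grid_balanced_zero_width_nonempty:
  assumes "0 < f"
  shows "grid_balanced l 0 q f \<noteq> {}"
proof -
  obtain n where f: "f = Suc n" using assms by (cases f) auto
  have "L = {}" if "L \<in> lines l 0 q f" for L
    using line_subset_grid[OF that] by (simp add: f)
  then have "(\<lambda>v\<in>{0..<q * l ^ f}. -1) \<in> grid_balanced l 0 q f"
    by (auto simp: balanced_def mem_assignments_iff f)
  then show ?thesis by blast
qed

text \<open>The grid uses only the even part \<open>m\<close> of \<open>l\<close>, so that every line can be balanced; for
  \<open>l = 1\<close> it is empty and the claimed bound is at most \<open>1\<close>.\<close>

lemma card_grid_balanced_ge_powr:
  assumes "0 < f" "0 < l"
  defines "m \<equiv> 2 * (l div 2)"
  shows "2 powr (real (q * l ^ f) * (1 - real f * log 2 (real f * sqrt l / (kappa / 2)) / l))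
    \<le> card (grid_balanced l m q f)"
proof (cases "m = 0")
  case True
  then have "l = 1" using assms(2) by (simp add: m_def)
  have "2 \<le> real f / (kappa / 2)"
    using kappa_pos kappa_less_one assms(1) by (simp add: field_simps)
  then have "1 \<le> log 2 (real f * sqrt l / (kappa / 2))"
    using \<open>l = 1\<close> by (simp add: le_log_iff)
  then have "1 * 1 \<le> real f * log 2 (real f * sqrt l / (kappa / 2))"
    using assms(1) by (intro mult_mono) simp_all
  then have "2 powr (real (q * l ^ f) * (1 - real f * log 2 (real f * sqrt l / (kappa / 2)) / l)) \<le> 2 powr 0"
    using \<open>l = 1\<close> by (intro powr_mono) (simp_all add: mult_nonneg_nonpos)
  also have "\<dots> \<le> card (grid_balanced l m q f)"
    using grid_balanced_zero_width_nonempty[OF assms(1)] True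
    by (simp add: Suc_le_eq card_gt_0_iff finite_balanced)
  finally show ?thesis .
next
  case False
  then have m: "2 \<le> m" "m \<le> l" "l \<le> m + 1" "even m" "0 < m"
    by (auto simp: m_def)
  have "real (q * l ^ f) * (1 - real f * log 2 (real f * sqrt l / (kappa / 2)) / l)
      \<le> real q * (real m ^ f * (1 + real f * log 2 (kappa / sqrt m) / m))"
    using exponent_log_le[OF assms(1) m(1-3)] by (simp add: mult.assoc mult_left_mono)
  then have "2 powr (real (q * l ^ f) * (1 - real f * log 2 (real f * sqrt l / (kappa / 2)) / l))
      \<le> 2 powr (real q * real m ^ f * (1 + real f * log 2 (kappa / sqrt m) / m))"
    by (simp add: mult.assoc)
  also have "\<dots> \<le> card (grid_balanced l m q f)"
    using card_grid_balanced_ge[OF m(2,4,5)] .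
  finally show ?thesis .
qed

lemma grid_line_couplings:
  assumes "0 < f" "m \<le> l" "grid_balanced l m q f \<noteq> {}"
  defines "N \<equiv> q * l ^ f" and "G \<equiv> grid l m q f" and "Ls \<equiv> lines l m q f"
  shows "vertex_degree N (line_couplings Ls) i \<le> f * (m - 1)"
    and "global_min N (outside_field G) (line_couplings Ls) A \<longleftrightarrow> A \<in> balanced N G Ls"
    and "global_min N (outside_field G) (line_couplings Ls) A
      \<Longrightarrow> k_minimum N (outside_field G) (line_couplings Ls) (2 ^ f - 1) A"
proof -
  have lines: "\<And>L. L \<in> Ls \<Longrightarrow> L \<subseteq> G" "G \<subseteq> {..<N}" "finite Ls"
    using line_subset_grid grid_subset[OF assms(2), of q f] finite_lines
    by (auto simp: G_def Ls_def N_def)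
  have "finite L" if "L \<in> Ls" for L
    using finite_subset[OF order_trans[OF lines(1)[OF that] lines(2)]] by simp
  then show "vertex_degree N (line_couplings Ls) i \<le> f * (m - 1)"
    using lines(3) card_line_le card_lines_containing_le[OF assms(2)]
    by (intro vertex_degree_line_couplings_le) (auto simp: Ls_def)
  have nonempty: "balanced N G Ls \<noteq> {}" using assms(3) by (simp add: N_def G_def Ls_def)
  then show "global_min N (outside_field G) (line_couplings Ls) A \<longleftrightarrow> A \<in> balanced N G Ls"
    using global_min_line_couplings_iff[OF lines(3,1,2)] by blast
  have "\<exists>L\<in>Ls. card (L \<inter> D) = 1" if "D \<subseteq> G" "D \<noteq> {}" "card D \<le> 2 ^ f - 1" for D
  proof -
    have "(0::nat) < 2 ^ f" by simp
    with that(3) have "card D < 2 ^ f" by linarith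
    then show ?thesis using line_meeting_once[OF assms(2), of D q f] that by (simp add: G_def Ls_def)
  qed
  then show "global_min N (outside_field G) (line_couplings Ls) A
      \<Longrightarrow> k_minimum N (outside_field G) (line_couplings Ls) (2 ^ f - 1) A"
    using global_min_line_couplings_k_minimum[OF lines(3,1,2) nonempty] by blast
qed

theorem mainTheorem6:
  shows "\<exists>c::real. c > 0 \<and>
    (\<forall>f l N :: nat. 0 < f \<longrightarrow> 0 < l \<longrightarrow> 0 < N \<longrightarrow> l ^ f dvd N \<longrightarrow>
      (\<exists>h J. ising_instance N h J \<and>
         (\<forall>i<N. vertex_degree N J i \<le> f * (l - 1)) \<and>
         real (card {A. global_min N h J A}) \<ge>
           2 powr (real N * (1 - real f * log 2 (real f * sqrt (real l) / c) / real l)) \<and>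
         (\<forall>A. global_min N h J A \<longrightarrow> k_minimum N h J (2 ^ f - 1) A)))"
proof (rule exI[of _ "kappa / 2"], intro conjI allI impI)
  show "0 < kappa / 2" using kappa_pos by simp
  fix f l N :: nat
  assume f: "0 < f" and l: "0 < l" and "0 < N" and "l ^ f dvd N"
  then obtain q where N: "N = q * l ^ f" by (auto simp: mult.commute)
  define m where "m = 2 * (l div 2)"
  have count: "2 powr (real N * (1 - real f * log 2 (real f * sqrt l / (kappa / 2)) / l))
      \<le> card (grid_balanced l m q f)"
    using card_grid_balanced_ge_powr[OF f l, of q] by (simp add: N m_def)
  then have nonempty: "grid_balanced l m q f \<noteq> {}"
    using less_le_trans[of 0] by fastforce
  have m: "m \<le> l" by (simp add: m_def)
  note properties = grid_line_couplings[OF f m nonempty]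
  let ?h = "outside_field (grid l m q f)" and ?J = "line_couplings (lines l m q f)"
  have "vertex_degree N ?J i \<le> f * (l - 1)" for i
  proof -
    have "vertex_degree N ?J i \<le> f * (m - 1)" using properties(1) by (simp add: N)
    also have "\<dots> \<le> f * (l - 1)" using m by (intro mult_left_mono diff_le_mono) simp_all
    finally show ?thesis .
  qed
  moreover have "{A. global_min N ?h ?J A} = grid_balanced l m q f"
    using properties(2) by (auto simp: N)
  moreover have "k_minimum N ?h ?J (2 ^ f - 1) A" if "global_min N ?h ?J A" for A
    using properties(3) that by (simp add: N)
  ultimately show "\<exists>h J. ising_instance N h J \<and> (\<forall>i<N. vertex_degree N J i \<le> f * (l - 1))
    \<and> real (card {A. global_min N h J A})
      \<ge> 2 powr (real N * (1 - real f * log 2 (real f * sqrt (real l) / (kappa / 2)) / real l))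
    \<and> (\<forall>A. global_min N h J A \<longrightarrow> k_minimum N h J (2 ^ f - 1) A)"
    using ising_instance_line_couplings count by (intro exI[of _ ?h] exI[of _ ?J]) simp
qed

end
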